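(* If \[\sum_{n\geq 1}\frac{|\alpha_n|}{p_n}\sup_{j\geq n}\left|\sum_{\ell=n}^j\alpha_\ell\right|<\infty,\] then $\mathrm{Var}(\hat S)<\infty$ and \[\mathrm{Var}(\hat S)=\alpha_0^2 +\sum_{n\geq 1} \frac{\alpha_n^2}{p_n} + 2\sum_{n\geq 1} \alpha_n S_{n-1} -S^2.\] If $\{\alpha_n\}$ is a sequence of nonnegative numbers and $\sum_{n\geq 1} \alpha_n S_{n-1}=\infty$, then $\mathrm{Var}(\hat S)=\infty$.
   Context: Let $S=\sum_{k\geq 0}\alpha_k$ be a series with $\sum_k|\alpha_k|<\infty$. Let $\tau$ be an almost surely finite random time taking nonnegative integer values such that $p_n:=\mathbb{P}(\tau\geq n)>0$ for all $n\geq 0$ (with $p_0=1$), so that $\lim_{n\to\infty}p_n=0$. Define the weighted partial sums $S_0=\alpha_0$ and, for $k\geq 1$, $S_k=\alpha_0+\sum_{j=1}^k \alpha_j/p_j$. The Russian roulette random truncation estimator of $S$ is $\hat S=S_\tau$; it has finite expectation and $\mathbb{E}(\hat S)=S$. *)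

theory Defs
  imports "HOL-Probability.Probability"
begin

definition surv :: "'a measure \<Rightarrow> ('a \<Rightarrow> nat) \<Rightarrow> nat \<Rightarrow> real" where
  "surv M \<tau> n = measure M {\<omega> \<in> space M. \<tau> \<omega> \<ge> n}"

definition wpsum :: "'a measure \<Rightarrow> ('a \<Rightarrow> nat) \<Rightarrow> (nat \<Rightarrow> real) \<Rightarrow> nat \<Rightarrow> real" where
  "wpsum M \<tau> \<alpha> k = \<alpha> 0 + (\<Sum>j=1..k. \<alpha> j / surv M \<tau> j)"

definition rr_est :: "'a measure \<Rightarrow> ('a \<Rightarrow> nat) \<Rightarrow> (nat \<Rightarrow> real) \<Rightarrow> 'a \<Rightarrow> real" where
  "rr_est M \<tau> \<alpha> \<omega> = wpsum M \<tau> \<alpha> (\<tau> \<omega>)"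

definition ext_variance :: "'a measure \<Rightarrow> ('a \<Rightarrow> real) \<Rightarrow> ennreal" where
  "ext_variance M X = (\<integral>\<^sup>+ \<omega>. ennreal ((X \<omega> - integral\<^sup>L M X)\<^sup>2) \<partial>M)"

end

theory Submission
  imports Defs
begin

text \<open>
  Write q(k) = p(k) - p(k+1) = P(tau = k), so that E f(tau) = sum_k q(k) f(k). Summation by parts gives
    sum_{k<=N} q(k) S(k)^2 = alpha(0)^2 + sum_{n<N} (alpha(n+1)^2 / p(n+1) + 2 alpha(n+1) S(n)) - p(N+1) S(N)^2.
  Under the hypothesis on the tail suprema, Tannery's theorem makes the cross series
  sum_n alpha(n+1) S(n) converge, hence the boundary term p(N+1) S(N)^2 converges. Its limit is 0:
  a positive limit would make sum_k q(k) / p(k+1) finite, but the partial sums of that series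
  dominate -ln p(N). For nonnegative alpha the sequence S increases, so the boundary term is bounded
  by the tail sum_{k>N} q(k) S(k)^2 of the second moment, and the same identity shows that a finite
  second moment forces the cross series to converge.
\<close>

definition wsum :: "(nat \<Rightarrow> real) \<Rightarrow> (nat \<Rightarrow> real) \<Rightarrow> nat \<Rightarrow> real" where
  "wsum p a k = a 0 + (\<Sum>j=1..k. a j / p j)"

lemma wsum_0 [simp]: "wsum p a 0 = a 0"
  by (simp add: wsum_def)

lemma wsum_Suc [simp]: "wsum p a (Suc k) = wsum p a k + a (Suc k) / p (Suc k)"
  by (simp add: wsum_def)

definition tail_sup :: "(nat \<Rightarrow> real) \<Rightarrow> nat \<Rightarrow> real" where
  "tail_sup a m = (SUP j\<in>{m..}. \<bar>\<Sum>l=m..j. a l\<bar>)"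

lemma abs_sum_le_tail_sup:
  assumes "summable (\<lambda>j. \<bar>a j\<bar>)" and "m \<le> j"
  shows "\<bar>\<Sum>l=m..j. a l\<bar> \<le> tail_sup a m"
proof -
  have "\<bar>\<Sum>l=m..j. a l\<bar> \<le> (\<Sum>l. \<bar>a l\<bar>)" for j
    by (rule order_trans[OF sum_abs sum_le_suminf[OF assms(1)]]) auto
  then have "bdd_above ((\<lambda>j. \<bar>\<Sum>l=m..j. a l\<bar>) ` {m..})"
    by (intro bdd_aboveI2)
  then show ?thesis
    unfolding tail_sup_def using assms(2) by (intro cSUP_upper) auto
qed

lemma abs_le_tail_sup: "summable (\<lambda>j. \<bar>a j\<bar>) \<Longrightarrow> \<bar>a m\<bar> \<le> tail_sup a m"
  using abs_sum_le_tail_sup[of a m m] by simp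

lemma abs_sum_Suc_le_tail_sup:
  assumes "summable (\<lambda>j. \<bar>a j\<bar>)"
  shows "\<bar>\<Sum>n=j..<N. a (Suc n)\<bar> \<le> 2 * tail_sup a j"
proof (cases "j \<le> N")
  case True
  have "(\<Sum>n=j..<N. a (Suc n)) = (\<Sum>l=Suc j..<Suc N. a l)"
    by (rule sum.shift_bounds_Suc_ivl[symmetric])
  also have "\<dots> = (\<Sum>l=j..N. a l) - a j"
    using True by (simp add: atLeastLessThanSuc_atLeastAtMost sum.atLeast_Suc_atMost)
  finally have "(\<Sum>n=j..<N. a (Suc n)) = (\<Sum>l=j..N. a l) - a j" .
  then show ?thesis
    using abs_sum_le_tail_sup[OF assms True] abs_le_tail_sup[OF assms, of j] by linarith
next
  case False
  then show ?thesis using abs_le_tail_sup[OF assms, of j] by simp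
qed

lemma sq_le_twice_centered_sq: "(x::real)\<^sup>2 \<le> 2 * (x - c)\<^sup>2 + 2 * c\<^sup>2"
proof -
  have "2 * (x - c)\<^sup>2 + 2 * c\<^sup>2 - x\<^sup>2 = (x - 2 * c)\<^sup>2"
    by (simp add: power2_eq_square algebra_simps)
  then show ?thesis using zero_le_power2[of "x - 2 * c"] by linarith
qed

locale survival_seq =
  fixes p :: "nat \<Rightarrow> real"
  assumes p_0: "p 0 = 1" and p_pos: "\<And>n. p n > 0" and p_Suc_le: "\<And>n. p (Suc n) \<le> p n"
    and p_tendsto_0: "p \<longlonglongrightarrow> 0"
begin

definition pmass :: "nat \<Rightarrow> real" where
  "pmass k = p k - p (Suc k)"

lemma pmass_nonneg: "pmass k \<ge> 0"
  using p_Suc_le[of k] by (simp add: pmass_def)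

lemma pmass_shift_sums: "(\<lambda>k. pmass (k + n)) sums p n"
proof -
  have "(\<Sum>k<N. pmass (k + n)) = p n - p (N + n)" for N
    by (induction N) (auto simp: pmass_def)
  moreover have "(\<lambda>N. p n - p (N + n)) \<longlonglongrightarrow> p n - 0"
    by (intro tendsto_diff tendsto_const LIMSEQ_ignore_initial_segment[OF p_tendsto_0])
  ultimately show ?thesis by (simp add: sums_def)
qed

lemma pmass_sums_1: "pmass sums 1"
  using pmass_shift_sums[of 0] p_0 by simp

lemma wsum_eq_sum: "wsum p a n = (\<Sum>j\<le>n. a j / p j)"
  by (induction n) (auto simp: p_0)

lemma sum_pmass_wsum:
  "(\<Sum>k\<le>N. pmass k * wsum p a k) = (\<Sum>j\<le>N. a j) - p (Suc N) * wsum p a N"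
proof (induction N)
  case (Suc N)
  then show ?case using p_pos[of "Suc N"] by (simp add: pmass_def algebra_simps)
qed (simp add: pmass_def p_0 algebra_simps)

lemma sum_pmass_wsum_sq:
  "(\<Sum>k\<le>N. pmass k * (wsum p a k)\<^sup>2) = (a 0)\<^sup>2
     + (\<Sum>n<N. (a (Suc n))\<^sup>2 / p (Suc n) + 2 * (a (Suc n) * wsum p a n))
     - p (Suc N) * (wsum p a N)\<^sup>2"
proof (induction N)
  case (Suc N)
  then show ?case using p_pos[of "Suc N"]
    by (simp add: pmass_def algebra_simps power2_eq_square add_divide_distrib)
qed (simp add: pmass_def p_0 algebra_simps)

lemma wsum_nonneg: "(\<And>j. a j \<ge> 0) \<Longrightarrow> wsum p a k \<ge> 0"
  by (induction k) (auto intro!: add_nonneg_nonneg divide_nonneg_pos p_pos)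

lemma incseq_wsum: "(\<And>j. a j \<ge> 0) \<Longrightarrow> incseq (wsum p a)"
  by (rule incseq_SucI) (auto intro!: divide_nonneg_pos p_pos)

lemma abs_wsum_le: "\<bar>wsum p a k\<bar> \<le> wsum p (\<lambda>j. \<bar>a j\<bar>) k"
proof (induction k)
  case (Suc k)
  then show ?case
    using abs_triangle_ineq[of "wsum p a k" "a (Suc k) / p (Suc k)"]
    by (simp add: abs_divide abs_of_pos[OF p_pos])
qed simp

lemma surv_mult_le_tail_sum:
  assumes g: "incseq g" and sg: "summable (\<lambda>k. pmass k * g k)"
  shows "p (Suc N) * g N \<le> (\<Sum>i. pmass (i + Suc N) * g (i + Suc N))"
proof -
  have const: "(\<lambda>i. pmass (i + Suc N) * g N) sums (p (Suc N) * g N)"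
    using pmass_shift_sums[of "Suc N"] by (rule sums_mult2)
  have "g N \<le> g (i + Suc N)" for i
    using g by (simp add: incseq_def)
  then have "(\<Sum>i. pmass (i + Suc N) * g N) \<le> (\<Sum>i. pmass (i + Suc N) * g (i + Suc N))"
    using const summable_ignore_initial_segment[OF sg, of "Suc N"]
    by (intro suminf_le) (auto simp: sums_iff intro!: mult_left_mono pmass_nonneg)
  then show ?thesis using const by (simp add: sums_iff)
qed

lemma surv_mult_tendsto_0:
  assumes g: "incseq g" and sg: "summable (\<lambda>k. pmass k * g k)"
  shows "(\<lambda>N. p (Suc N) * g N) \<longlonglongrightarrow> 0"
proof (rule real_tendsto_sandwich)
  show "(\<lambda>N. p (Suc N) * g 0) \<longlonglongrightarrow> 0"
    by (intro tendsto_mult_left_zero LIMSEQ_Suc[OF p_tendsto_0])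
  show "(\<lambda>N. \<Sum>i. pmass (i + Suc N) * g (i + Suc N)) \<longlonglongrightarrow> 0"
    using LIMSEQ_Suc[OF suminf_exist_split2[OF sg]] by simp
  show "\<forall>\<^sub>F N in sequentially. p (Suc N) * g 0 \<le> p (Suc N) * g N"
    using g p_pos by (auto intro!: always_eventually mult_left_mono less_imp_le simp: incseq_def)
  show "\<forall>\<^sub>F N in sequentially. p (Suc N) * g N \<le> (\<Sum>i. pmass (i + Suc N) * g (i + Suc N))"
    using surv_mult_le_tail_sum[OF g sg] by simp
qed

lemma not_summable_pmass_div_surv: "\<not> summable (\<lambda>k. pmass k / p (Suc k))"
proof
  assume sm: "summable (\<lambda>k. pmass k / p (Suc k))"
  have step: "ln (p k) - ln (p (Suc k)) \<le> pmass k / p (Suc k)" for k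
  proof -
    have "ln (p k / p (Suc k)) \<le> p k / p (Suc k) - 1"
      using p_pos by (intro ln_le_minus_one) (simp add: divide_pos_pos)
    then show ?thesis
      using p_pos[of k] p_pos[of "Suc k"] by (simp add: ln_div pmass_def diff_divide_distrib)
  qed
  have bound: "- ln (p N) \<le> (\<Sum>k. pmass k / p (Suc k))" for N
  proof -
    have "- ln (p N) = (\<Sum>k<N. ln (p k) - ln (p (Suc k)))"
      using sum_lessThan_telescope'[of "\<lambda>k. ln (p k)" N] by (simp add: p_0)
    also have "\<dots> \<le> (\<Sum>k<N. pmass k / p (Suc k))"
      by (intro sum_mono step)
    also have "\<dots> \<le> (\<Sum>k. pmass k / p (Suc k))"
      using sm p_pos by (intro sum_le_suminf) (auto intro!: divide_nonneg_pos pmass_nonneg)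
    finally show ?thesis .
  qed
  have "filterlim (\<lambda>N. ln (p N)) at_bot sequentially"
  proof (rule filterlim_compose[OF ln_at_0])
    show "filterlim p (at_right 0) sequentially"
      using p_tendsto_0 p_pos by (intro tendsto_imp_filterlim_at_right) (auto intro!: always_eventually)
  qed
  then obtain N where "ln (p N) < - (\<Sum>k. pmass k / p (Suc k))"
    by (auto simp: filterlim_at_bot_dense eventually_sequentially)
  with bound[of N] show False
    by linarith
qed

lemma surv_mult_limit_eq_0:
  assumes f: "\<And>k. f k \<ge> 0" and sf: "summable (\<lambda>k. pmass k * f k)"
    and lim: "(\<lambda>N. p (Suc N) * f N) \<longlonglongrightarrow> L"
  shows "L = 0"
proof (rule ccontr)
  assume "L \<noteq> 0"
  moreover have "L \<ge> 0"
    using f p_pos by (intro tendsto_lowerbound[OF lim] always_eventually)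
      (auto intro: less_imp_le mult_nonneg_nonneg)
  ultimately have L: "L > 0" by simp
  then obtain K where K: "\<And>N. N \<ge> K \<Longrightarrow> p (Suc N) * f N > L / 2"
    using order_tendstoD(1)[OF lim, of "L / 2"] by (auto simp: eventually_sequentially)
  have "summable (\<lambda>k. pmass k / p (Suc k))"
  proof (rule summable_comparison_test)
    show "summable (\<lambda>k. 2 / L * (pmass k * f k))"
      using sf by (rule summable_mult)
    have "norm (pmass k / p (Suc k)) \<le> 2 / L * (pmass k * f k)" if "k \<ge> K" for k
    proof -
      have "1 / p (Suc k) \<le> 2 / L * f k"
        using K[OF that] L p_pos[of "Suc k"] by (simp add: field_simps)
      then have "pmass k * (1 / p (Suc k)) \<le> pmass k * (2 / L * f k)"
        by (rule mult_left_mono[OF _ pmass_nonneg])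
      then show ?thesis
        using pmass_nonneg[of k] p_pos[of "Suc k"] by (simp add: mult.left_commute)
    qed
    then show "\<exists>N. \<forall>k\<ge>N. norm (pmass k / p (Suc k)) \<le> 2 / L * (pmass k * f k)"
      by blast
  qed
  with not_summable_pmass_div_surv show False ..
qed

lemma pmass_wsum_sums:
  assumes sa: "summable (\<lambda>j. \<bar>a j\<bar>)"
  shows "summable (\<lambda>k. pmass k * \<bar>wsum p a k\<bar>)" and "(\<lambda>k. pmass k * wsum p a k) sums suminf a"
proof -
  let ?b = "wsum p (\<lambda>j. \<bar>a j\<bar>)"
  have sb: "summable (\<lambda>k. pmass k * ?b k)"
  proof (rule bounded_imp_summable)
    show "0 \<le> pmass k * ?b k" for k
      using pmass_nonneg wsum_nonneg[of "\<lambda>j. \<bar>a j\<bar>"] by simp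
    fix N
    have "0 \<le> p (Suc N) * ?b N"
      using p_pos[of "Suc N"] wsum_nonneg[of "\<lambda>j. \<bar>a j\<bar>" N] by simp
    then have "(\<Sum>k\<le>N. pmass k * ?b k) \<le> (\<Sum>j\<le>N. \<bar>a j\<bar>)"
      unfolding sum_pmass_wsum by linarith
    also have "\<dots> \<le> (\<Sum>j. \<bar>a j\<bar>)"
      using sa by (intro sum_le_suminf) auto
    finally show "(\<Sum>k\<le>N. pmass k * ?b k) \<le> (\<Sum>j. \<bar>a j\<bar>)" .
  qed
  have bound: "\<bar>wsum p a k\<bar> \<le> ?b k" for k
    by (rule abs_wsum_le)
  have weighted: "pmass k * \<bar>wsum p a k\<bar> \<le> pmass k * ?b k" for k
    by (rule mult_left_mono[OF bound pmass_nonneg])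
  show "summable (\<lambda>k. pmass k * \<bar>wsum p a k\<bar>)"
    by (rule summable_comparison_test[OF _ sb]) (use weighted pmass_nonneg in \<open>auto simp: abs_mult\<close>)
  have "\<forall>N. norm (p (Suc N) * wsum p a N) \<le> p (Suc N) * ?b N"
    using bound p_pos by (simp add: abs_mult mult_left_mono less_imp_le)
  moreover have "(\<lambda>N. p (Suc N) * ?b N) \<longlonglongrightarrow> 0"
    using surv_mult_tendsto_0[OF incseq_wsum sb] by simp
  ultimately have "(\<lambda>N. p (Suc N) * wsum p a N) \<longlonglongrightarrow> 0"
    by (rule Lim_null_comparison[OF always_eventually])
  then have "(\<lambda>N. (\<Sum>j\<le>N. a j) - p (Suc N) * wsum p a N) \<longlonglongrightarrow> suminf a - 0"
    by (intro tendsto_diff summable_LIMSEQ' summable_rabs_cancel[OF sa])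
  then show "(\<lambda>k. pmass k * wsum p a k) sums suminf a"
    unfolding sums_def_le sum_pmass_wsum by simp
qed

lemma sum_cross_term_swap:
  "(\<Sum>n<N. a (Suc n) * wsum p a n) = (\<Sum>j<N. a j / p j * (\<Sum>n=j..<N. a (Suc n)))"
proof (induction N)
  case (Suc N)
  have "(\<Sum>j<Suc N. a j / p j * (\<Sum>n=j..<Suc N. a (Suc n)))
      = (\<Sum>j<N. a j / p j * ((\<Sum>n=j..<N. a (Suc n)) + a (Suc N))) + a N / p N * a (Suc N)"
    by (simp add: sum.atLeastLessThan_Suc)
  also have "\<dots> = (\<Sum>j<N. a j / p j * (\<Sum>n=j..<N. a (Suc n))) + a (Suc N) * (\<Sum>j\<le>N. a j / p j)"
    by (simp add: algebra_simps sum.distrib sum_distrib_left sum_distrib_right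
        lessThan_Suc_atMost[symmetric])
  finally show ?case using Suc by (simp add: wsum_eq_sum)
qed simp

lemma cross_term_summable:
  assumes sa: "summable (\<lambda>j. \<bar>a j\<bar>)"
    and H: "summable (\<lambda>n. \<bar>a (Suc n)\<bar> / p (Suc n) * tail_sup a (Suc n))"
  shows "summable (\<lambda>n. a (Suc n) * wsum p a n)"
proof -
  define A where "A j N = a j / p j * (\<Sum>n=j..<N. a (Suc n))" for j N
  define b where "b j = a j / p j * (suminf (\<lambda>n. a (Suc n)) - (\<Sum>n<j. a (Suc n)))" for j
  have sas: "summable (\<lambda>n. a (Suc n))"
    using summable_rabs_cancel[OF sa] by (subst summable_Suc_iff)
  have lim: "(\<lambda>N. A j N) \<longlonglongrightarrow> b j" for j
  proof (rule Lim_transform_eventually)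
    show "(\<lambda>N. a j / p j * ((\<Sum>n<N. a (Suc n)) - (\<Sum>n<j. a (Suc n))))
        \<longlonglongrightarrow> b j"
      unfolding b_def by (intro tendsto_intros summable_LIMSEQ[OF sas])
    show "\<forall>\<^sub>F N in sequentially. a j / p j * ((\<Sum>n<N. a (Suc n)) - (\<Sum>n<j. a (Suc n))) = A j N"
    proof (rule eventually_sequentiallyI)
      fix N assume "j \<le> N"
      then have "(\<Sum>n<N. a (Suc n)) - (\<Sum>n<j. a (Suc n)) = (\<Sum>n=j..<N. a (Suc n))"
        by (simp add: lessThan_atLeast0 sum_diff_nat_ivl)
      then show "a j / p j * ((\<Sum>n<N. a (Suc n)) - (\<Sum>n<j. a (Suc n))) = A j N"
        by (simp add: A_def)
    qed
  qed
  have bound: "norm (A j N) \<le> 2 * (\<bar>a j\<bar> / p j * tail_sup a j)" for j N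
  proof -
    have "\<bar>a j\<bar> / p j * \<bar>\<Sum>n=j..<N. a (Suc n)\<bar> \<le> \<bar>a j\<bar> / p j * (2 * tail_sup a j)"
      using abs_sum_Suc_le_tail_sup[OF sa] p_pos[of j] by (intro mult_left_mono) auto
    then show ?thesis
      using p_pos[of j] by (simp add: A_def abs_mult mult.left_commute)
  qed
  have dominating: "summable (\<lambda>j. 2 * (\<bar>a j\<bar> / p j * tail_sup a j))"
    by (intro summable_mult, subst summable_Suc_iff[symmetric]) (rule H)
  have "(\<lambda>N. \<Sum>j. A j N) \<longlonglongrightarrow> suminf b"
    using tannerys_theorem[of A b sequentially, OF lim _ dominating] bound
    by (auto intro!: always_eventually)
  moreover have "(\<Sum>j. A j N) = (\<Sum>n<N. a (Suc n) * wsum p a n)" for N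
  proof -
    have "(\<Sum>j. A j N) = (\<Sum>j<N. A j N)"
      by (rule suminf_finite) (auto simp: A_def)
    then show ?thesis
      by (simp add: A_def sum_cross_term_swap)
  qed
  ultimately show ?thesis
    by (auto simp: sums_def intro: sums_summable)
qed

lemma summable_sq_div_surv:
  assumes sa: "summable (\<lambda>j. \<bar>a j\<bar>)"
    and H: "summable (\<lambda>n. \<bar>a (Suc n)\<bar> / p (Suc n) * tail_sup a (Suc n))"
  shows "summable (\<lambda>n. (a (Suc n))\<^sup>2 / p (Suc n))"
proof (rule summable_comparison_test[OF _ H], intro exI allI impI)
  fix n
  have "\<bar>a (Suc n)\<bar> / p (Suc n) * \<bar>a (Suc n)\<bar> \<le> \<bar>a (Suc n)\<bar> / p (Suc n) * tail_sup a (Suc n)"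
    using p_pos[of "Suc n"] abs_le_tail_sup[OF sa] by (intro mult_left_mono) auto
  then show "norm ((a (Suc n))\<^sup>2 / p (Suc n)) \<le> \<bar>a (Suc n)\<bar> / p (Suc n) * tail_sup a (Suc n)"
    using p_pos[of "Suc n"] by (simp add: power2_eq_square abs_mult)
qed

lemma second_moment_sums:
  assumes sx: "summable (\<lambda>n. (a (Suc n))\<^sup>2 / p (Suc n))"
    and sy: "summable (\<lambda>n. a (Suc n) * wsum p a n)"
  shows "(\<lambda>k. pmass k * (wsum p a k)\<^sup>2) sums
           ((a 0)\<^sup>2 + (\<Sum>n. (a (Suc n))\<^sup>2 / p (Suc n)) + 2 * (\<Sum>n. a (Suc n) * wsum p a n))"
    (is "_ sums ?A")
proof -
  define t where "t n = (a (Suc n))\<^sup>2 / p (Suc n) + 2 * (a (Suc n) * wsum p a n)" for n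
  define partial where "partial N = (a 0)\<^sup>2 + (\<Sum>n<N. t n)" for N
  have "t sums ((\<Sum>n. (a (Suc n))\<^sup>2 / p (Suc n)) + 2 * (\<Sum>n. a (Suc n) * wsum p a n))"
    unfolding t_def by (intro sums_add sums_mult summable_sums sx sy)
  then have partial_lim: "partial \<longlonglongrightarrow> ?A"
    unfolding partial_def sums_def by (simp add: add.assoc tendsto_add_const_iff)
  then have "Bseq partial"
    by (intro convergent_imp_Bseq convergentI)
  then obtain B where B: "\<And>N. partial N \<le> B"
    by (auto simp: Bseq_def dest: abs_le_D1)
  have abel: "(\<Sum>k\<le>N. pmass k * (wsum p a k)\<^sup>2) = partial N - p (Suc N) * (wsum p a N)\<^sup>2" for N
    unfolding sum_pmass_wsum_sq partial_def t_def by simp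
  have summ: "summable (\<lambda>k. pmass k * (wsum p a k)\<^sup>2)"
  proof (rule bounded_imp_summable)
    show "0 \<le> pmass k * (wsum p a k)\<^sup>2" for k
      using pmass_nonneg by simp
    show "(\<Sum>k\<le>N. pmass k * (wsum p a k)\<^sup>2) \<le> B" for N
      using abel[of N] B[of N] p_pos[of "Suc N"] by (smt (verit) mult_nonneg_nonneg zero_le_power2)
  qed
  have "(\<lambda>N. partial N - (\<Sum>k\<le>N. pmass k * (wsum p a k)\<^sup>2))
          \<longlonglongrightarrow> ?A - (\<Sum>k. pmass k * (wsum p a k)\<^sup>2)"
    by (intro tendsto_diff partial_lim summable_LIMSEQ'[OF summ])
  then have "(\<lambda>N. p (Suc N) * (wsum p a N)\<^sup>2) \<longlonglongrightarrow> ?A - (\<Sum>k. pmass k * (wsum p a k)\<^sup>2)"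
    by (simp add: abel)
  from surv_mult_limit_eq_0[OF _ summ this] have "?A = (\<Sum>k. pmass k * (wsum p a k)\<^sup>2)"
    by simp
  with summ show ?thesis
    by (simp add: summable_sums)
qed

lemma cross_term_summable_nonneg:
  assumes a: "\<And>j. a j \<ge> 0" and summ: "summable (\<lambda>k. pmass k * (wsum p a k)\<^sup>2)"
  shows "summable (\<lambda>n. a (Suc n) * wsum p a n)"
proof -
  define t where "t n = (a (Suc n))\<^sup>2 / p (Suc n) + 2 * (a (Suc n) * wsum p a n)" for n
  have "incseq (\<lambda>k. (wsum p a k)\<^sup>2)"
    using incseq_wsum[OF a] wsum_nonneg[OF a] by (auto simp: incseq_def intro: power_mono)
  from surv_mult_tendsto_0[OF this summ]
  have "(\<lambda>N. (\<Sum>k\<le>N. pmass k * (wsum p a k)\<^sup>2) - (a 0)\<^sup>2 + p (Suc N) * (wsum p a N)\<^sup>2)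
          \<longlonglongrightarrow> (\<Sum>k. pmass k * (wsum p a k)\<^sup>2) - (a 0)\<^sup>2 + 0"
    by (intro tendsto_add tendsto_diff summable_LIMSEQ'[OF summ] tendsto_const)
  then have "(\<lambda>N. \<Sum>n<N. t n) \<longlonglongrightarrow> (\<Sum>k. pmass k * (wsum p a k)\<^sup>2) - (a 0)\<^sup>2"
    unfolding sum_pmass_wsum_sq t_def by simp
  then have "summable t"
    by (auto simp: sums_def intro: sums_summable)
  moreover have "0 \<le> a (Suc n) * wsum p a n" "a (Suc n) * wsum p a n \<le> t n" for n
    using a wsum_nonneg[OF a] p_pos[of "Suc n"] by (auto simp: t_def)
  ultimately show ?thesis
    by (intro summable_comparison_test[OF _ \<open>summable t\<close>]) auto
qed

lemma centered_second_moment_sums: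
  assumes "(\<lambda>k. pmass k * h k) sums m" and "(\<lambda>k. pmass k * (h k)\<^sup>2) sums A"
  shows "(\<lambda>k. pmass k * (h k - m)\<^sup>2) sums (A - m\<^sup>2)"
proof -
  have "(\<lambda>k. pmass k * (h k)\<^sup>2 - 2 * m * (pmass k * h k) + m\<^sup>2 * pmass k) sums (A - 2 * m * m + m\<^sup>2 * 1)"
    by (intro sums_add sums_diff sums_mult assms pmass_sums_1)
  then show ?thesis
    by (simp add: power2_eq_square algebra_simps)
qed

lemma summable_sq_if_summable_centered_sq:
  assumes "summable (\<lambda>k. pmass k * (h k - c)\<^sup>2)"
  shows "summable (\<lambda>k. pmass k * (h k)\<^sup>2)"
proof (rule summable_comparison_test)
  show "summable (\<lambda>k. 2 * (pmass k * (h k - c)\<^sup>2) + 2 * c\<^sup>2 * pmass k)"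
    using assms sums_summable[OF pmass_sums_1] by (intro summable_add summable_mult)
  have "pmass k * (h k)\<^sup>2 \<le> pmass k * (2 * (h k - c)\<^sup>2 + 2 * c\<^sup>2)" for k
    by (intro mult_left_mono pmass_nonneg sq_le_twice_centered_sq)
  then show "\<exists>N. \<forall>k\<ge>N. norm (pmass k * (h k)\<^sup>2) \<le> 2 * (pmass k * (h k - c)\<^sup>2) + 2 * c\<^sup>2 * pmass k"
    using pmass_nonneg by (auto simp: algebra_simps)
qed

end

locale random_time = prob_space M for M :: "'a measure" +
  fixes \<tau> :: "'a \<Rightarrow> nat"
  assumes measurable_tau [measurable]: "\<tau> \<in> measurable M (count_space UNIV)"
    and surv_pos: "\<And>n. surv M \<tau> n > 0"
begin

lemma survival_seq: "survival_seq (surv M \<tau>)"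
proof
  show "surv M \<tau> 0 = 1"
    by (simp add: surv_def prob_space)
  show "0 < surv M \<tau> n" for n
    by (rule surv_pos)
  show "surv M \<tau> (Suc n) \<le> surv M \<tau> n" for n
    unfolding surv_def by (intro finite_measure_mono) auto
  have "(\<lambda>n. measure M {\<omega> \<in> space M. n \<le> \<tau> \<omega>}) \<longlonglongrightarrow> measure M (\<Inter>n. {\<omega> \<in> space M. n \<le> \<tau> \<omega>})"
    by (rule finite_Lim_measure_decseq) (auto simp: decseq_def)
  moreover have "(\<Inter>n. {\<omega> \<in> space M. n \<le> \<tau> \<omega>}) = {}"
    by (auto simp: set_eq_iff) (metis Suc_n_not_le_n)
  ultimately show "surv M \<tau> \<longlonglongrightarrow> 0"
    by (simp add: surv_def[abs_def])
qed

sublocale survival_seq "surv M \<tau>"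
  by (rule survival_seq)

lemma measure_tau_eq: "measure M {\<omega> \<in> space M. \<tau> \<omega> = k} = pmass k"
proof -
  have "{\<omega> \<in> space M. \<tau> \<omega> = k} = {\<omega> \<in> space M. k \<le> \<tau> \<omega>} - {\<omega> \<in> space M. Suc k \<le> \<tau> \<omega>}"
    by auto
  then show ?thesis
    by (simp add: pmass_def surv_def finite_measure_Diff Collect_mono_iff)
qed

lemma distr_tau: "distr M (count_space UNIV) \<tau> = density (count_space UNIV) (\<lambda>k. ennreal (pmass k))"
proof (rule measure_eqI_countable[where A = UNIV])
  fix k :: nat
  have "emeasure (distr M (count_space UNIV) \<tau>) {k} = emeasure M {\<omega> \<in> space M. \<tau> \<omega> = k}"
    by (subst emeasure_distr) (auto intro!: arg_cong[where f = "emeasure M"])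
  also have "\<dots> = emeasure (density (count_space UNIV) (\<lambda>k. ennreal (pmass k))) {k}"
    by (simp add: emeasure_eq_measure measure_tau_eq emeasure_density)
  finally show "emeasure (distr M (count_space UNIV) \<tau>) {k}
      = emeasure (density (count_space UNIV) (\<lambda>k. ennreal (pmass k))) {k}" .
qed auto

lemma nn_integral_comp_tau: "(\<integral>\<^sup>+ \<omega>. ennreal (h (\<tau> \<omega>)) \<partial>M) = (\<Sum>k. ennreal (pmass k * h k))"
proof -
  have "(\<integral>\<^sup>+ \<omega>. ennreal (h (\<tau> \<omega>)) \<partial>M) = (\<integral>\<^sup>+ k. ennreal (h k) \<partial>distr M (count_space UNIV) \<tau>)"
    by (subst nn_integral_distr) auto
  also have "\<dots> = (\<integral>\<^sup>+ k. ennreal (pmass k) * ennreal (h k) \<partial>count_space UNIV)"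
    unfolding distr_tau by (subst nn_integral_density) auto
  also have "\<dots> = (\<Sum>k. ennreal (pmass k * h k))"
    by (subst nn_integral_count_space_nat) (simp add: ennreal_mult'[OF pmass_nonneg])
  finally show ?thesis .
qed

lemma integral_comp_tau:
  assumes "summable (\<lambda>k. pmass k * \<bar>h k\<bar>)"
  shows "integral\<^sup>L M (\<lambda>\<omega>. h (\<tau> \<omega>)) = (\<Sum>k. pmass k * h k)"
proof -
  have int: "integrable (count_space UNIV) (\<lambda>k. pmass k *\<^sub>R h k)"
    using assms by (simp add: integrable_count_space_nat_iff abs_mult abs_of_nonneg pmass_nonneg)
  have "integral\<^sup>L M (\<lambda>\<omega>. h (\<tau> \<omega>)) = integral\<^sup>L (distr M (count_space UNIV) \<tau>) h"
    by (subst integral_distr) auto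
  also have "\<dots> = integral\<^sup>L (count_space UNIV) (\<lambda>k. pmass k *\<^sub>R h k)"
    unfolding distr_tau by (subst integral_density) (auto simp: pmass_nonneg)
  also have "\<dots> = (\<Sum>k. pmass k * h k)"
    using integral_count_space_nat[OF int] by simp
  finally show ?thesis .
qed

lemma ext_variance_comp_tau:
  "ext_variance M (\<lambda>\<omega>. h (\<tau> \<omega>))
     = (\<Sum>k. ennreal (pmass k * (h k - integral\<^sup>L M (\<lambda>\<omega>. h (\<tau> \<omega>)))\<^sup>2))"
  unfolding ext_variance_def by (rule nn_integral_comp_tau)

lemma ext_variance_comp_tau_finite:
  assumes "summable (\<lambda>k. pmass k * \<bar>h k\<bar>)" and mean: "(\<lambda>k. pmass k * h k) sums m"
    and "(\<lambda>k. pmass k * (h k)\<^sup>2) sums A"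
  shows "ext_variance M (\<lambda>\<omega>. h (\<tau> \<omega>)) < \<infinity>"
    and "enn2real (ext_variance M (\<lambda>\<omega>. h (\<tau> \<omega>))) = A - m\<^sup>2"
proof -
  have mean_eq: "integral\<^sup>L M (\<lambda>\<omega>. h (\<tau> \<omega>)) = m"
    using integral_comp_tau[OF assms(1)] mean by (simp add: sums_iff)
  have centered: "(\<lambda>k. pmass k * (h k - m)\<^sup>2) sums (A - m\<^sup>2)"
    by (rule centered_second_moment_sums[OF mean assms(3)])
  have "0 \<le> (\<Sum>k. pmass k * (h k - m)\<^sup>2)"
    by (rule suminf_nonneg[OF sums_summable[OF centered]]) (simp add: pmass_nonneg)
  then have "0 \<le> A - m\<^sup>2"
    by (simp add: sums_unique[OF centered, symmetric])
  have "ext_variance M (\<lambda>\<omega>. h (\<tau> \<omega>)) = ennreal (A - m\<^sup>2)"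
    unfolding ext_variance_comp_tau mean_eq
    by (rule suminf_ennreal_eq[OF _ centered]) (simp add: pmass_nonneg)
  with \<open>0 \<le> A - m\<^sup>2\<close> show "ext_variance M (\<lambda>\<omega>. h (\<tau> \<omega>)) < \<infinity>"
    and "enn2real (ext_variance M (\<lambda>\<omega>. h (\<tau> \<omega>))) = A - m\<^sup>2"
    by simp_all
qed

lemma ext_variance_comp_tau_infinite:
  assumes "\<not> summable (\<lambda>k. pmass k * (h k)\<^sup>2)"
  shows "ext_variance M (\<lambda>\<omega>. h (\<tau> \<omega>)) = \<infinity>"
proof (rule ccontr)
  assume "ext_variance M (\<lambda>\<omega>. h (\<tau> \<omega>)) \<noteq> \<infinity>"
  then have "summable (\<lambda>k. pmass k * (h k - integral\<^sup>L M (\<lambda>\<omega>. h (\<tau> \<omega>)))\<^sup>2)"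
    unfolding ext_variance_comp_tau using pmass_nonneg by (intro summable_suminf_not_top) auto
  with assms show False
    using summable_sq_if_summable_centered_sq by blast
qed

end

theorem proposition2:
  fixes M :: "'a measure" and \<tau> :: "'a \<Rightarrow> nat" and \<alpha> :: "nat \<Rightarrow> real"
  assumes "prob_space M"
    and "\<tau> \<in> measurable M (count_space UNIV)"
    and "\<And>n. surv M \<tau> n > 0"
    and "summable (\<lambda>k. \<bar>\<alpha> k\<bar>)"
  shows
    "(summable (\<lambda>n. \<bar>\<alpha> (Suc n)\<bar> / surv M \<tau> (Suc n)
          * (SUP j\<in>{Suc n..}. \<bar>\<Sum>l=Suc n..j. \<alpha> l\<bar>))
      \<longrightarrow> ext_variance M (rr_est M \<tau> \<alpha>) < \<infinity>
        \<and> summable (\<lambda>n. (\<alpha> (Suc n))\<^sup>2 / surv M \<tau> (Suc n))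
        \<and> summable (\<lambda>n. \<alpha> (Suc n) * wpsum M \<tau> \<alpha> n)
        \<and> enn2real (ext_variance M (rr_est M \<tau> \<alpha>)) =
            (\<alpha> 0)\<^sup>2 + (\<Sum>n. (\<alpha> (Suc n))\<^sup>2 / surv M \<tau> (Suc n))
            + 2 * (\<Sum>n. \<alpha> (Suc n) * wpsum M \<tau> \<alpha> n) - (\<Sum>k. \<alpha> k)\<^sup>2)
     \<and> (((\<forall>n. \<alpha> n \<ge> 0) \<and> \<not> summable (\<lambda>n. \<alpha> (Suc n) * wpsum M \<tau> \<alpha> n))
      \<longrightarrow> ext_variance M (rr_est M \<tau> \<alpha>) = \<infinity>)"
proof -
  interpret random_time M \<tau>
    using assms(1-3) by (simp add: random_time_def random_time_axioms_def)
  have wpsum: "wpsum M \<tau> \<alpha> = wsum (surv M \<tau>) \<alpha>"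
    by (simp add: wpsum_def wsum_def fun_eq_iff)
  have est: "rr_est M \<tau> \<alpha> = (\<lambda>\<omega>. wsum (surv M \<tau>) \<alpha> (\<tau> \<omega>))"
    by (simp add: rr_est_def wpsum fun_eq_iff)
  show ?thesis
    unfolding est wpsum
  proof (intro conjI impI)
    assume "summable (\<lambda>n. \<bar>\<alpha> (Suc n)\<bar> / surv M \<tau> (Suc n)
          * (SUP j\<in>{Suc n..}. \<bar>\<Sum>l=Suc n..j. \<alpha> l\<bar>))"
    then have H: "summable (\<lambda>n. \<bar>\<alpha> (Suc n)\<bar> / surv M \<tau> (Suc n) * tail_sup \<alpha> (Suc n))"
      by (simp add: tail_sup_def)
    show sq: "summable (\<lambda>n. (\<alpha> (Suc n))\<^sup>2 / surv M \<tau> (Suc n))"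
      by (rule summable_sq_div_surv[OF assms(4) H])
    show cross: "summable (\<lambda>n. \<alpha> (Suc n) * wsum (surv M \<tau>) \<alpha> n)"
      by (rule cross_term_summable[OF assms(4) H])
    note variance = ext_variance_comp_tau_finite[OF pmass_wsum_sums[OF assms(4)] second_moment_sums[OF sq cross]]
    show "ext_variance M (\<lambda>\<omega>. wsum (surv M \<tau>) \<alpha> (\<tau> \<omega>)) < \<infinity>"
      by (rule variance(1))
    show "enn2real (ext_variance M (\<lambda>\<omega>. wsum (surv M \<tau>) \<alpha> (\<tau> \<omega>))) =
        (\<alpha> 0)\<^sup>2 + (\<Sum>n. (\<alpha> (Suc n))\<^sup>2 / surv M \<tau> (Suc n))
        + 2 * (\<Sum>n. \<alpha> (Suc n) * wsum (surv M \<tau>) \<alpha> n) - (\<Sum>k. \<alpha> k)\<^sup>2"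
      by (rule variance(2))
  next
    assume "(\<forall>n. \<alpha> n \<ge> 0) \<and> \<not> summable (\<lambda>n. \<alpha> (Suc n) * wsum (surv M \<tau>) \<alpha> n)"
    then have "\<not> summable (\<lambda>k. pmass k * (wsum (surv M \<tau>) \<alpha> k)\<^sup>2)"
      using cross_term_summable_nonneg by blast
    then show "ext_variance M (\<lambda>\<omega>. wsum (surv M \<tau>) \<alpha> (\<tau> \<omega>)) = \<infinity>"
      by (rule ext_variance_comp_tau_infinite)
  qed
qed

end
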